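(* Let $E$ be a computable abelian group with computable subgroups $A,B,G,H$ such that $E = A\oplus G = B\oplus H$ (internal direct sums), where $A$ and $B$ are isomorphic and cyclic, and let $D=G\cap H$. Let $u\in G$ and $v\in H$ be such that $G=\langle u\rangle\oplus D$ and $H=\langle v\rangle\oplus D$. Then, uniformly in indices for $E,A,B,G,H$ and in $u$ and $v$, one can compute (an index for) a computable isomorphism between $G$ and $H$.
   Context: A computable group is given by an index for a program computing its atomic diagram (domain a subset of $\omega$); a computable subgroup is one whose underlying set is computable, given by an index of its characteristic function. *)

theory Defs
  imports "HOL-Algebra.Algebra" "HOL-Library.Nat_Bijection"
begin

datatype recf =
    Zero
  | Succ
  | Proj nat
  | Comp recf "recf list"
  | Prim recf recf
  | Mn recf

inductive eval :: "recf \<Rightarrow> nat list \<Rightarrow> nat \<Rightarrow> bool" where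
  eval_Zero: "eval Zero xs 0"
| eval_Succ: "eval Succ (x # xs) (Suc x)"
| eval_Proj: "i < length xs \<Longrightarrow> eval (Proj i) xs (xs ! i)"
| eval_Comp: "list_all2 (\<lambda>g y. eval g xs y) gs ys \<Longrightarrow> eval f ys z \<Longrightarrow> eval (Comp f gs) xs z"
| eval_Prim0: "eval f xs y \<Longrightarrow> eval (Prim f g) (0 # xs) y"
| eval_PrimS: "eval (Prim f g) (n # xs) y \<Longrightarrow> eval g (n # y # xs) z \<Longrightarrow> eval (Prim f g) (Suc n # xs) z"
| eval_Mn: "eval f (n # xs) 0 \<Longrightarrow> (\<forall>m<n. \<exists>y. eval f (m # xs) y \<and> 0 < y) \<Longrightarrow> eval (Mn f) xs n"

fun code :: "recf \<Rightarrow> nat" where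
  "code Zero = prod_encode (0, 0)"
| "code Succ = prod_encode (1, 0)"
| "code (Proj i) = prod_encode (2, i)"
| "code (Comp f gs) = prod_encode (3, prod_encode (code f, list_encode (map code gs)))"
| "code (Prim f g) = prod_encode (4, prod_encode (code f, code g))"
| "code (Mn f) = prod_encode (5, code f)"

definition phi :: "nat \<Rightarrow> nat list \<Rightarrow> nat \<Rightarrow> bool" where
  "phi e xs y \<longleftrightarrow> (\<exists>p. code p = e \<and> eval p xs y)"

definition char_index :: "nat \<Rightarrow> nat set \<Rightarrow> bool" where
  "char_index e S \<longleftrightarrow> (\<forall>x. phi e [x] (if x \<in> S then 1 else 0))"

text \<open>e is an index for the (atomic diagram of the) group structure E with domain a subset
  of \<omega>: e codes a pair (d, m) where d decides the domain and m decides the relation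
  x \<otimes> y = z on elements of the domain.\<close>
definition group_index :: "nat \<Rightarrow> nat monoid \<Rightarrow> bool" where
  "group_index e E \<longleftrightarrow>
     char_index (fst (prod_decode e)) (carrier E) \<and>
     (\<forall>x y z. phi (snd (prod_decode e)) [x, y, z]
        (if x \<in> carrier E \<and> y \<in> carrier E \<and> z \<in> carrier E \<and> x \<otimes>\<^bsub>E\<^esub> y = z then 1 else 0))"

definition internal_direct_sum :: "('a, 'b) monoid_scheme \<Rightarrow> 'a set \<Rightarrow> 'a set \<Rightarrow> bool" where
  "internal_direct_sum E A G \<longleftrightarrow>
     subgroup A E \<and> subgroup G E \<and> A \<inter> G = {\<one>\<^bsub>E\<^esub>} \<and> A <#>\<^bsub>E\<^esub> G = carrier E"

end

theory Submission
  imports Defs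
begin

text \<open>Write w = u v\<inverse> and D = G \<inter> H.  Every coset x\<langle>w\<rangle> with x \<in> G meets H in exactly one
  point, and sending x to that point is the isomorphism G = \<langle>u\<rangle> \<oplus> D \<rightarrow> \<langle>v\<rangle> \<oplus> D = H which fixes D
  and maps u to v.  This needs ord u = ord v, which follows by cancelling the isomorphic cyclic
  groups A and B in E/D = \<langle>Da\<rangle> \<oplus> \<langle>Du\<rangle> = \<langle>Db\<rangle> \<oplus> \<langle>Dv\<rangle>, where torsion and rank of these two-generator
  abelian groups determine the orders.

  The isomorphism is computable uniformly: search for the least n with x w^n \<in> H or
  x w^-n \<in> H, computing products by unbounded search in the decidable multiplication relation of E.
  The search program is a template whose holes are filled with deciders for the multiplication
  and for H and with constant programs for u and v; the code of the filled template is a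
  primitive recursive function of the codes of the fillers.\<close>

section \<open>Elementary partial recursive functions\<close>

lemma eval_Comp1: "eval g xs y \<Longrightarrow> eval f [y] z \<Longrightarrow> eval (Comp f [g]) xs z"
  by (rule eval_Comp[of _ _ "[y]"]) auto

lemma eval_Comp2:
  "eval g1 xs y1 \<Longrightarrow> eval g2 xs y2 \<Longrightarrow> eval f [y1, y2] z \<Longrightarrow> eval (Comp f [g1, g2]) xs z"
  by (rule eval_Comp[of _ _ "[y1, y2]"]) auto

lemma eval_Comp3:
  "eval g1 xs y1 \<Longrightarrow> eval g2 xs y2 \<Longrightarrow> eval g3 xs y3 \<Longrightarrow> eval f [y1, y2, y3] z
    \<Longrightarrow> eval (Comp f [g1, g2, g3]) xs z"
  by (rule eval_Comp[of _ _ "[y1, y2, y3]"]) auto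

lemma eval_Comp4:
  "eval g1 xs y1 \<Longrightarrow> eval g2 xs y2 \<Longrightarrow> eval g3 xs y3 \<Longrightarrow> eval g4 xs y4
    \<Longrightarrow> eval f [y1, y2, y3, y4] z \<Longrightarrow> eval (Comp f [g1, g2, g3, g4]) xs z"
  by (rule eval_Comp[of _ _ "[y1, y2, y3, y4]"]) auto

lemma eval_Proj_nth: "i < length xs \<Longrightarrow> y = xs ! i \<Longrightarrow> eval (Proj i) xs y"
  using eval_Proj by simp

lemma eval_Succ_single: "eval Succ [x] (Suc x)"
  using eval_Succ[of x "[]"] .

lemma eval_Mn_least:
  assumes "\<And>z. eval f (z # xs) (g z)" and "g n = 0" and "\<And>m. m < n \<Longrightarrow> 0 < g m"
  shows "eval (Mn f) xs n"
proof (rule eval_Mn)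
  show "eval f (n # xs) 0" using assms(1)[of n] assms(2) by simp
  show "\<forall>m<n. \<exists>y. eval f (m # xs) y \<and> 0 < y" using assms(1,3) by blast
qed

lemma eval_Mn_Least:
  assumes "\<And>z. eval f (z # xs) (if P z then 0 else 1)" and "\<exists>z. P z"
  shows "eval (Mn f) xs (LEAST z. P z)"
  using assms by (intro eval_Mn_least[OF assms(1)]) (auto intro: LeastI_ex dest: not_less_Least)

lemma eval_Mn_unique:
  assumes "\<And>z. eval f (z # xs) (if P z then 0 else 1)" and "P z0" and "\<And>z. P z \<Longrightarrow> z = z0"
  shows "eval (Mn f) xs z0"
proof -
  have "(LEAST z. P z) = z0"
    using assms(2,3) by (blast intro: Least_equality)
  then show ?thesis
    using eval_Mn_Least[OF assms(1)] assms(2) by auto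
qed

primrec r_const :: "nat \<Rightarrow> recf" where
  "r_const 0 = Zero"
| "r_const (Suc n) = Comp Succ [r_const n]"

lemma eval_r_const: "eval (r_const n) xs n"
  by (induction n) (auto intro: eval_Zero eval_Comp1 eval_Succ_single)

definition r_add :: recf where
  "r_add = Prim (Proj 0) (Comp Succ [Proj 1])"

lemma eval_r_add: "eval r_add [a, b] (a + b)"
proof (induction a)
  case 0
  show ?case unfolding r_add_def by (auto intro!: eval_Prim0 eval_Proj_nth)
next
  case (Suc a)
  show ?case unfolding r_add_def
    by (rule eval_PrimS[OF Suc[unfolded r_add_def]])
      (auto intro!: eval_Comp1 eval_Proj_nth eval_Succ_single)
qed

definition r_pred :: recf where
  "r_pred = Prim Zero (Proj 0)"

lemma eval_r_pred: "eval r_pred [a] (a - 1)"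
proof (induction a)
  case 0
  show ?case unfolding r_pred_def by (auto intro!: eval_Prim0 eval_Zero)
next
  case (Suc a)
  show ?case unfolding r_pred_def
    by (rule eval_PrimS[OF Suc[unfolded r_pred_def]]) (auto intro!: eval_Proj_nth)
qed

definition r_monus :: recf where
  "r_monus = Prim (Proj 0) (Comp r_pred [Proj 1])"

lemma eval_r_monus: "eval r_monus [b, a] (a - b)"
proof (induction b)
  case 0
  show ?case unfolding r_monus_def by (auto intro!: eval_Prim0 eval_Proj_nth)
next
  case (Suc b)
  have pred: "eval r_pred [a - b] (a - Suc b)"
    using eval_r_pred[of "a - b"] by simp
  show ?case unfolding r_monus_def
    by (rule eval_PrimS[OF Suc[unfolded r_monus_def] eval_Comp1[OF eval_Proj_nth pred]])
      simp_all
qed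

definition r_triangle :: recf where
  "r_triangle = Prim Zero (Comp r_add [Comp Succ [Proj 0], Proj 1])"

lemma eval_r_triangle: "eval r_triangle [n] (triangle n)"
proof (induction n)
  case 0
  show ?case unfolding r_triangle_def by (auto intro!: eval_Prim0 eval_Zero)
next
  case (Suc n)
  have add: "eval r_add [Suc n, triangle n] (triangle (Suc n))"
    using eval_r_add[of "Suc n" "triangle n"] by (simp add: add.commute)
  show ?case unfolding r_triangle_def
    by (rule eval_PrimS[OF Suc[unfolded r_triangle_def] eval_Comp2[OF
          eval_Comp1[OF eval_Proj_nth eval_Succ_single] eval_Proj_nth add]]) simp_all
qed

definition r_prod_encode :: recf where
  "r_prod_encode = Comp r_add [Comp r_triangle [Comp r_add [Proj 0, Proj 1]], Proj 0]"

lemma eval_r_prod_encode: "eval r_prod_encode [a, b] (prod_encode (a, b))"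
  unfolding r_prod_encode_def prod_encode_def
  by (auto intro!: eval_Comp1 eval_Comp2 eval_Proj_nth eval_r_add eval_r_triangle)

definition r_not :: recf where
  "r_not = Comp r_monus [Proj 0, r_const 1]"

lemma eval_r_not: "eval r_not [c] (if c = 0 then 1 else 0)"
proof -
  have "eval r_not [c] (1 - c)"
    unfolding r_not_def by (rule eval_Comp2[OF eval_Proj_nth eval_r_const eval_r_monus]) simp_all
  then show ?thesis by (cases c) simp_all
qed

lemma eval_r_not_bool: "eval r_not [if P then 1 else 0] (if P then 0 else 1)"
  using eval_r_not[of 0] eval_r_not[of 1] by (cases P) simp_all

definition r_ifz :: recf where
  "r_ifz = Prim (Proj 1) (Proj 2)"

lemma eval_r_ifz: "eval r_ifz [c, a, b] (if c = 0 then b else a)"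
proof (induction c)
  case 0
  show ?case unfolding r_ifz_def by (auto intro!: eval_Prim0 eval_Proj_nth)
next
  case (Suc c)
  show ?case unfolding r_ifz_def
    by (rule eval_PrimS[OF Suc[unfolded r_ifz_def]]) (auto intro!: eval_Proj_nth)
qed

lemma eval_r_ifz_bool: "eval r_ifz [if P then 1 else 0, a, b] (if P then a else b)"
  using eval_r_ifz[of 0 a b] eval_r_ifz[of 1 a b] by (cases P) simp_all

text \<open>The second component of prod_decode e is s - (e - triangle s), where s is the least
  number with e < triangle (Suc s).\<close>
definition r_snd_decode :: recf where
  "r_snd_decode =
     Comp (Comp r_monus [Comp r_monus [Comp r_triangle [Proj 0], Proj 1], Proj 0])
       [Mn (Comp r_monus [Comp r_triangle [Comp Succ [Proj 0]], Comp Succ [Proj 1]]), Proj 0]"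

lemma eval_r_snd_decode: "eval r_snd_decode [e] (snd (prod_decode e))"
proof -
  obtain a b where ab: "prod_decode e = (a, b)" by force
  then have e: "e = triangle (a + b) + a"
    using prod_decode_inverse[of e] by (simp add: prod_encode_def)
  define s where "s = a + b"
  have step: "eval (Comp r_monus [Comp r_triangle [Comp Succ [Proj 0]], Comp Succ [Proj 1]]) [z, e]
      (Suc e - triangle (Suc z))" for z
    by (rule eval_Comp2[OF eval_Comp1[OF eval_Comp1[OF eval_Proj_nth eval_Succ_single]
          eval_r_triangle] eval_Comp1[OF eval_Proj_nth eval_Succ_single] eval_r_monus]) simp_all
  have search: "eval (Mn (Comp r_monus [Comp r_triangle [Comp Succ [Proj 0]], Comp Succ [Proj 1]]))
      [e] s"
  proof (rule eval_Mn_least[OF step])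
    show "Suc e - triangle (Suc s) = 0" using e s_def by simp
    fix m assume "m < s"
    then have "triangle (Suc m) \<le> triangle s"
      unfolding triangle_def by (intro div_le_mono mult_le_mono) auto
    then show "0 < Suc e - triangle (Suc m)" using e s_def by simp
  qed
  have "eval r_snd_decode [e] (s - (e - triangle s))"
    unfolding r_snd_decode_def
    by (rule eval_Comp2[OF search eval_Proj_nth eval_Comp2[OF eval_Comp2[OF
          eval_Comp1[OF eval_Proj_nth eval_r_triangle] eval_Proj_nth eval_r_monus]
          eval_Proj_nth eval_r_monus]]) simp_all
  then show ?thesis using ab e s_def by simp
qed

lemma inj_code: "inj code"
proof (rule injI)
  fix p q :: recf
  show "code p = code q \<Longrightarrow> p = q"
  proof (induction p arbitrary: q)
    case (Comp f gs)
    then obtain f' gs' where q: "q = Comp f' gs'"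
      by (cases q) auto
    with Comp.prems have "code f = code f'" and codes: "map code gs = map code gs'"
      by (auto simp: list_encode_eq)
    moreover have "gs = gs'"
      using codes Comp.IH(2)
    proof (induction gs arbitrary: gs')
      case (Cons g gs)
      then show ?case by (cases gs') auto
    qed simp
    ultimately show ?case using Comp.IH(1) q by simp
  next
    case Zero
    then show ?case by (cases q) auto
  next
    case Succ
    then show ?case by (cases q) auto
  next
    case (Proj i)
    then show ?case by (cases q) auto
  next
    case (Prim f g)
    then show ?case by (cases q) auto
  next
    case (Mn f)
    then show ?case by (cases q) auto
  qed
qed

lemma phi_program:
  assumes "\<And>x. phi e (xs x) (y x)"
  shows "\<exists>p. code p = e \<and> (\<forall>x. eval p (xs x) (y x))"
proof -
  obtain p where p: "code p = e"
    using assms unfolding phi_def by blast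
  have "eval p (xs x) (y x)" for x
    using assms[of x] p injD[OF inj_code] unfolding phi_def by metis
  with p show ?thesis by blast
qed

section \<open>Programs with holes\<close>

datatype template =
    TZero
  | TSucc
  | TProj nat
  | TComp template "template list"
  | TPrim template template
  | TMn template
  | THole nat

primrec fill :: "(nat \<Rightarrow> recf) \<Rightarrow> template \<Rightarrow> recf" where
  "fill s TZero = Zero"
| "fill s TSucc = Succ"
| "fill s (TProj i) = Proj i"
| "fill s (TComp f gs) = Comp (fill s f) (map (fill s) gs)"
| "fill s (TPrim f g) = Prim (fill s f) (fill s g)"
| "fill s (TMn f) = Mn (fill s f)"
| "fill s (THole i) = s i"

primrec template_of :: "recf \<Rightarrow> template" where
  "template_of Zero = TZero"
| "template_of Succ = TSucc"
| "template_of (Proj i) = TProj i"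
| "template_of (Comp f gs) = TComp (template_of f) (map template_of gs)"
| "template_of (Prim f g) = TPrim (template_of f) (template_of g)"
| "template_of (Mn f) = TMn (template_of f)"

lemma fill_template_of [simp]: "fill s (template_of p) = p"
  by (induction p) (auto simp: map_idI)

fun holes :: "template \<Rightarrow> nat set" where
  "holes TZero = {}"
| "holes TSucc = {}"
| "holes (TProj i) = {}"
| "holes (TComp f gs) = holes f \<union> (\<Union>g\<in>set gs. holes g)"
| "holes (TPrim f g) = holes f \<union> holes g"
| "holes (TMn f) = holes f"
| "holes (THole i) = {i}"

lemma holes_template_of [simp]: "holes (template_of p) = {}"
  by (induction p) auto

primrec r_list_encode :: "recf list \<Rightarrow> recf" where
  "r_list_encode [] = Zero"
| "r_list_encode (g # gs) = Comp Succ [Comp r_prod_encode [g, r_list_encode gs]]"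

lemma eval_r_list_encode:
  "list_all2 (\<lambda>g y. eval g xs y) gs ys \<Longrightarrow> eval (r_list_encode gs) xs (list_encode ys)"
proof (induction gs arbitrary: ys)
  case Nil
  then show ?case by (auto intro: eval_Zero)
next
  case (Cons g gs)
  then obtain y ys' where "ys = y # ys'" and "eval g xs y" and "list_all2 (\<lambda>g y. eval g xs y) gs ys'"
    by (cases ys) auto
  with Cons.IH show ?case
    by (auto intro!: eval_Comp1 eval_Comp2 eval_Succ_single eval_r_prod_encode)
qed

primrec r_fill_code :: "template \<Rightarrow> recf" where
  "r_fill_code TZero = r_const (code Zero)"
| "r_fill_code TSucc = r_const (code Succ)"
| "r_fill_code (TProj i) = r_const (code (Proj i))"
| "r_fill_code (TComp f gs) =
     Comp r_prod_encode [r_const 3,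
       Comp r_prod_encode [r_fill_code f, r_list_encode (map r_fill_code gs)]]"
| "r_fill_code (TPrim f g) =
     Comp r_prod_encode [r_const 4, Comp r_prod_encode [r_fill_code f, r_fill_code g]]"
| "r_fill_code (TMn f) = Comp r_prod_encode [r_const 5, r_fill_code f]"
| "r_fill_code (THole i) = Proj i"

lemma eval_r_fill_code:
  assumes "holes t \<subseteq> {..<length ps}"
  shows "eval (r_fill_code t) (map code ps) (code (fill ((!) ps) t))"
  using assms
proof (induction t)
  case (TComp f gs)
  have "list_all2 (\<lambda>g y. eval g (map code ps) y) (map r_fill_code gs) (map (code \<circ> fill ((!) ps)) gs)"
    using TComp by (auto simp: list_all2_conv_all_nth) (meson SUP_le_iff nth_mem)
  then have "eval (r_list_encode (map r_fill_code gs)) (map code ps)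
      (list_encode (map code (map (fill ((!) ps)) gs)))"
    by (simp add: eval_r_list_encode)
  with TComp show ?case
    by (auto intro!: eval_Comp2 eval_r_prod_encode eval_r_const)
qed (auto intro!: eval_Comp2 eval_r_prod_encode eval_r_const eval_Proj_nth)

text \<open>code (Comp Succ [p]) = prod_encode (3, prod_encode (code Succ, Suc (prod_encode (code p, 0)))).\<close>
definition r_code_const :: recf where
  "r_code_const =
     Prim (r_const 0)
       (Comp r_prod_encode [r_const 3,
          Comp r_prod_encode [r_const (code Succ), Comp Succ [Comp r_prod_encode [Proj 1, Zero]]]])"

lemma eval_r_code_const: "eval r_code_const [n] (code (r_const n))"
proof (induction n)
  case 0
  have "code (r_const 0) = 0" by (simp add: prod_encode_def)
  then show ?case unfolding r_code_const_def by (metis eval_Prim0 eval_r_const)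
next
  case (Suc n)
  show ?case unfolding r_code_const_def
    by (rule eval_PrimS[OF Suc[unfolded r_code_const_def]])
      (auto intro!: eval_Comp1 eval_Comp2 eval_r_prod_encode eval_r_const eval_Proj_nth
        eval_Succ_single eval_Zero)
qed

section \<open>Searching a coset for an element of H\<close>

lemma (in group) int_pow_nat_cases:
  assumes "w \<in> carrier G"
  obtains (nonneg) n :: nat where "w [^] (m::int) = w [^] n" | (neg) n :: nat where "w [^] m = (inv w) [^] n"
proof (cases "m \<ge> 0")
  case True
  then show ?thesis
    using nonneg[of "nat m"] by (simp add: flip: int_pow_int)
next
  case False
  define n where "n = nat (- m)"
  have "m = - int n"
    using False by (simp add: n_def)
  then have "w [^] m = (inv w) [^] n"
    using assms by (simp add: int_pow_neg_int nat_pow_inv)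
  then show ?thesis
    by (rule neg)
qed

definition t_not :: template where
  "t_not = template_of r_not"

definition t_ifz :: template where
  "t_ifz = template_of r_ifz"

text \<open>Hole 0 decides the multiplication relation of a group, hole 1 membership in a subset H.\<close>
definition t_mult_test :: "nat \<Rightarrow> nat \<Rightarrow> nat \<Rightarrow> template" where
  "t_mult_test i j k = TComp t_not [TComp (THole 0) [TProj i, TProj j, TProj k]]"

definition t_div :: "nat \<Rightarrow> nat \<Rightarrow> template" where
  "t_div i j = TMn (t_mult_test 0 (Suc i) (Suc j))"

definition t_pow_mult :: template where
  "t_pow_mult = TPrim (TProj 0) (TMn (t_mult_test 2 4 0))"

definition t_member :: "template \<Rightarrow> template" where
  "t_member t = TComp (THole 1) [t]"

definition t_fwd :: template where
  "t_fwd = TComp t_pow_mult [TProj 0, TProj 1, TProj 2]"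

definition t_bwd :: template where
  "t_bwd = TComp t_pow_mult [TProj 0, TProj 1, TProj 3]"

definition t_found :: template where
  "t_found = TComp t_ifz [t_member t_fwd, TZero, TComp t_not [t_member t_bwd]]"

definition t_found_value :: template where
  "t_found_value = TComp t_ifz [t_member t_fwd, t_fwd, t_bwd]"

definition t_coset_search :: template where
  "t_coset_search = TComp t_found_value [TMn t_found, TProj 0, TProj 1, TProj 2]"

text \<open>Holes 2 and 3 hold constant programs for u and v.\<close>
definition iso_template :: template where
  "iso_template = TComp (TComp t_coset_search [TProj 0, t_div 2 1, t_div 1 2]) [TProj 0, THole 2, THole 3]"

lemma holes_iso_template: "holes iso_template \<subseteq> {..<4}"
  by (auto simp: iso_template_def t_coset_search_def t_found_value_def t_found_def t_fwd_def
      t_bwd_def t_member_def t_pow_mult_def t_div_def t_mult_test_def t_not_def t_ifz_def)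

locale decided_group =
  fixes E :: "nat monoid" (structure) and H :: "nat set" and s :: "nat \<Rightarrow> recf"
  assumes group_E: "group E"
    and eval_mult_hole: "\<And>a b c. eval (s 0) [a, b, c]
      (if a \<in> carrier E \<and> b \<in> carrier E \<and> c \<in> carrier E \<and> a \<otimes> b = c then 1 else 0)"
    and eval_member_hole: "\<And>y. eval (s 1) [y] (if y \<in> H then 1 else 0)"
begin

interpretation group E
  by (rule group_E)

lemma eval_t_mult_test:
  assumes "i < length xs" "j < length xs" "k < length xs"
  shows "eval (fill s (t_mult_test i j k)) xs
    (if xs ! i \<in> carrier E \<and> xs ! j \<in> carrier E \<and> xs ! k \<in> carrier E \<and> xs ! i \<otimes> xs ! j = xs ! k
     then 0 else 1)"
  unfolding t_mult_test_def t_not_def fill.simps list.map fill_template_of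
  by (rule eval_Comp1[OF eval_Comp3[OF eval_Proj_nth eval_Proj_nth eval_Proj_nth eval_mult_hole]
        eval_r_not_bool]) (use assms in simp_all)

lemma eval_t_div:
  assumes "i < length xs" "j < length xs" "xs ! i \<in> carrier E" "xs ! j \<in> carrier E"
    and "y = xs ! j \<otimes> inv (xs ! i)"
  shows "eval (fill s (t_div i j)) xs y"
  unfolding t_div_def fill.simps \<open>y = _\<close>
proof (rule eval_Mn_unique)
  show "eval (fill s (t_mult_test 0 (Suc i) (Suc j))) (z # xs)
      (if z \<in> carrier E \<and> z \<otimes> xs ! i = xs ! j then 0 else 1)" for z
    using eval_t_mult_test[of 0 "z # xs" "Suc i" "Suc j"] assms by simp
  show "xs ! j \<otimes> inv (xs ! i) \<in> carrier E \<and> xs ! j \<otimes> inv (xs ! i) \<otimes> xs ! i = xs ! j"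
    using assms by (simp add: m_assoc)
  show "z = xs ! j \<otimes> inv (xs ! i)" if "z \<in> carrier E \<and> z \<otimes> xs ! i = xs ! j" for z
    using that assms by (metis inv_solve_right)
qed

lemma eval_t_pow_mult:
  assumes x: "x \<in> carrier E" and w: "w \<in> carrier E"
  shows "eval (fill s t_pow_mult) [n, x, w] (x \<otimes> w [^] n)"
proof (induction n)
  case 0
  show ?case unfolding t_pow_mult_def fill.simps
    by (rule eval_Prim0) (rule eval_Proj_nth, use x in simp_all)
next
  case (Suc n)
  let ?y = "x \<otimes> w [^] n"
  have "eval (Mn (fill s (t_mult_test 2 4 0))) [n, ?y, x, w] (?y \<otimes> w)"
  proof (rule eval_Mn_unique)
    show "eval (fill s (t_mult_test 2 4 0)) (z # [n, ?y, x, w])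
        (if z \<in> carrier E \<and> ?y \<otimes> w = z then 0 else 1)" for z
      using eval_t_mult_test[of 2 "z # [n, ?y, x, w]" 4 0] x w by simp
  qed (use x w in auto)
  moreover have "?y \<otimes> w = x \<otimes> w [^] Suc n"
    using x w by (simp add: m_assoc)
  ultimately show ?case
    using Suc unfolding t_pow_mult_def fill.simps by (auto intro: eval_PrimS)
qed

lemma eval_t_fwd:
  "x \<in> carrier E \<Longrightarrow> w \<in> carrier E \<Longrightarrow> eval (fill s t_fwd) [n, x, w, w'] (x \<otimes> w [^] n)"
  unfolding t_fwd_def fill.simps list.map
  by (rule eval_Comp3[OF eval_Proj_nth eval_Proj_nth eval_Proj_nth eval_t_pow_mult]) simp_all

lemma eval_t_bwd:
  "x \<in> carrier E \<Longrightarrow> w' \<in> carrier E \<Longrightarrow> eval (fill s t_bwd) [n, x, w, w'] (x \<otimes> w' [^] n)"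
  unfolding t_bwd_def fill.simps list.map
  by (rule eval_Comp3[OF eval_Proj_nth eval_Proj_nth eval_Proj_nth eval_t_pow_mult]) simp_all

lemma eval_t_member: "eval (fill s t) xs y \<Longrightarrow> eval (fill s (t_member t)) xs (if y \<in> H then 1 else 0)"
  unfolding t_member_def fill.simps list.map by (rule eval_Comp1[OF _ eval_member_hole])

lemma eval_t_found:
  assumes "x \<in> carrier E" "w \<in> carrier E" "w' \<in> carrier E"
  shows "eval (fill s t_found) [n, x, w, w']
    (if x \<otimes> w [^] n \<in> H \<or> x \<otimes> w' [^] n \<in> H then 0 else 1)"
proof -
  have "eval (fill s t_found) [n, x, w, w']
     (if x \<otimes> w [^] n \<in> H then 0 else if x \<otimes> w' [^] n \<in> H then 0 else 1)"
    unfolding t_found_def fill.simps list.map t_ifz_def t_not_def fill_template_of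
    by (rule eval_Comp3[OF eval_t_member[OF eval_t_fwd] eval_Zero
          eval_Comp1[OF eval_t_member[OF eval_t_bwd] eval_r_not_bool] eval_r_ifz_bool])
      (use assms in simp_all)
  then show ?thesis by (cases "x \<otimes> w [^] n \<in> H") simp_all
qed

lemma eval_t_found_value:
  assumes "x \<in> carrier E" "w \<in> carrier E" "w' \<in> carrier E"
  shows "eval (fill s t_found_value) [n, x, w, w']
    (if x \<otimes> w [^] n \<in> H then x \<otimes> w [^] n else x \<otimes> w' [^] n)"
  unfolding t_found_value_def fill.simps list.map t_ifz_def fill_template_of
  by (rule eval_Comp3[OF eval_t_member[OF eval_t_fwd] eval_t_fwd eval_t_bwd eval_r_ifz_bool])
    (use assms in simp_all)

lemma eval_t_coset_search:
  assumes x: "x \<in> carrier E" and w: "w \<in> carrier E" and w': "w' \<in> carrier E"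
    and found: "\<exists>n::nat. x \<otimes> w [^] n \<in> H \<or> x \<otimes> w' [^] n \<in> H"
  shows "\<exists>(n::nat) y. eval (fill s t_coset_search) [x, w, w'] y \<and> y \<in> H \<and>
     (y = x \<otimes> w [^] n \<or> y = x \<otimes> w' [^] n)"
proof -
  define n where "n = (LEAST n::nat. x \<otimes> w [^] n \<in> H \<or> x \<otimes> w' [^] n \<in> H)"
  have "eval (fill s (TMn t_found)) [x, w, w'] n"
    unfolding n_def fill.simps
    by (rule eval_Mn_Least[OF eval_t_found[OF x w w'] found])
  then have "eval (fill s t_coset_search) [x, w, w']
      (if x \<otimes> w [^] n \<in> H then x \<otimes> w [^] n else x \<otimes> w' [^] n)"
    unfolding t_coset_search_def fill.simps(3,4) list.map
    by (rule eval_Comp4[OF _ eval_Proj_nth eval_Proj_nth eval_Proj_nth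
          eval_t_found_value[OF x w w']]) simp_all
  moreover have "x \<otimes> w [^] n \<in> H \<or> x \<otimes> w' [^] n \<in> H"
    unfolding n_def using found by (rule LeastI_ex)
  ultimately show ?thesis by (metis (full_types))
qed

lemma eval_iso_template:
  assumes s2: "s 2 = r_const u" and s3: "s 3 = r_const v"
    and u: "u \<in> carrier E" and v: "v \<in> carrier E" and x: "x \<in> carrier E"
    and meets: "\<exists>m::int. x \<otimes> (u \<otimes> inv v) [^] m \<in> H"
  shows "\<exists>y. eval (fill s iso_template) [x] y \<and> y \<in> H \<and> (\<exists>m::int. y = x \<otimes> (u \<otimes> inv v) [^] m)"
proof -
  define w where "w = u \<otimes> inv v"
  have w: "w \<in> carrier E" and inv_w: "v \<otimes> inv u = inv w"
    using u v by (simp_all add: w_def inv_mult_group)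
  obtain m :: int where "x \<otimes> w [^] m \<in> H"
    using meets unfolding w_def by blast
  then have "\<exists>n::nat. x \<otimes> w [^] n \<in> H \<or> x \<otimes> (inv w) [^] n \<in> H"
    by (cases rule: int_pow_nat_cases[OF w, of m]) auto
  then obtain n :: nat and y where search: "eval (fill s t_coset_search) [x, w, inv w] y"
    and y: "y \<in> H" "y = x \<otimes> w [^] n \<or> y = x \<otimes> (inv w) [^] n"
    using eval_t_coset_search[OF x w inv_closed[OF w]] by blast
  have "eval (fill s iso_template) [x] y"
    unfolding iso_template_def fill.simps(3,4,7) list.map s2 s3
    by (rule eval_Comp3[OF eval_Proj_nth eval_r_const eval_r_const
          eval_Comp3[OF eval_Proj_nth eval_t_div eval_t_div search[folded inv_w, unfolded w_def]]])
      (use u v in simp_all)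
  moreover have "w [^] n = w [^] int n" and "(inv w) [^] n = w [^] (- int n)"
    using w by (simp_all add: int_pow_int nat_pow_inv int_pow_neg_int)
  ultimately show ?thesis
    using y unfolding w_def by metis
qed

end

section \<open>Cancellation of cyclic summands\<close>

definition cyclic_decomposition :: "('a, 'b) monoid_scheme \<Rightarrow> 'a \<Rightarrow> 'a \<Rightarrow> bool" where
  "cyclic_decomposition G a u \<longleftrightarrow>
     a \<in> carrier G \<and> u \<in> carrier G \<and>
     (\<forall>x\<in>carrier G. \<exists>(i::int) (j::int). x = a [^]\<^bsub>G\<^esub> i \<otimes>\<^bsub>G\<^esub> u [^]\<^bsub>G\<^esub> j) \<and>
     (\<forall>(i::int) (j::int). a [^]\<^bsub>G\<^esub> i \<otimes>\<^bsub>G\<^esub> u [^]\<^bsub>G\<^esub> j = \<one>\<^bsub>G\<^esub>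
        \<longrightarrow> a [^]\<^bsub>G\<^esub> i = \<one>\<^bsub>G\<^esub> \<and> u [^]\<^bsub>G\<^esub> j = \<one>\<^bsub>G\<^esub>)"

lemma (in group) ord_eq_if_int_pow_eq_one_iff:
  assumes "group H" and "x \<in> carrier G" and "y \<in> carrier H"
    and "\<And>k::int. x [^] k = \<one> \<longleftrightarrow> y [^]\<^bsub>H\<^esub> k = \<one>\<^bsub>H\<^esub>"
  shows "ord x = group.ord H y"
proof -
  have "int (ord x) dvd k \<longleftrightarrow> int (group.ord H y) dvd k" for k
    using assms int_pow_eq_id group.int_pow_eq_id by metis
  then show ?thesis
    by (metis dvd_antisym dvd_refl of_nat_dvd_iff)
qed

lemma eq_if_int_dvd_diff:
  assumes "int n dvd int i - int i'" and "i < n" and "i' < n"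
  shows "i = i'"
  using assms dvd_imp_le_int[of "int i - int i'" "int n"] by (cases "i = i'") auto

context comm_group
begin

lemma cyclic_decompositionD:
  assumes "cyclic_decomposition G a u"
  shows "a \<in> carrier G" and "u \<in> carrier G"
    and "x \<in> carrier G \<Longrightarrow> \<exists>(i::int) (j::int). x = a [^] i \<otimes> u [^] j"
    and "a [^] (i::int) \<otimes> u [^] (j::int) = \<one> \<Longrightarrow> a [^] i = \<one> \<and> u [^] j = \<one>"
  using assms unfolding cyclic_decomposition_def by blast+

lemma int_pow_mod_ord: "a \<in> carrier G \<Longrightarrow> a [^] (i mod int (ord a)) = a [^] i"
  by (simp add: int_pow_eq mod_eq_dvd_iff)

lemma cyclic_decomposition_pow_eq:
  assumes dec: "cyclic_decomposition G a u"
    and eq: "a [^] i \<otimes> u [^] j = a [^] i' \<otimes> u [^] j'"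
  shows "int (ord a) dvd i - i'" and "int (ord u) dvd j - j'"
proof -
  note dec = cyclic_decompositionD[OF dec]
  have "a [^] (i - i') \<otimes> u [^] (j - j') = (a [^] i \<otimes> u [^] j) \<otimes> inv (a [^] i' \<otimes> u [^] j')"
    using dec(1,2) by (simp add: int_pow_diff inv_mult_group m_ac)
  also have "\<dots> = \<one>"
    using eq dec(1,2) by simp
  finally show "int (ord a) dvd i - i'" and "int (ord u) dvd j - j'"
    using dec(4) int_pow_eq_id[OF dec(1)] int_pow_eq_id[OF dec(2)] by blast+
qed

lemma card_cyclic_decomposition:
  assumes dec: "cyclic_decomposition G a u" and "ord a \<noteq> 0" and "ord u \<noteq> 0"
  shows "finite (carrier G) \<and> card (carrier G) = ord a * ord u"
proof -
  note dec' = cyclic_decompositionD[OF dec]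
  define f where "f = (\<lambda>(i::nat, j::nat). a [^] i \<otimes> u [^] j)"
  have "inj_on f ({..<ord a} \<times> {..<ord u})"
  proof (rule inj_onI, clarify)
    fix i j i' j' assume "i < ord a" "j < ord u" "i' < ord a" "j' < ord u" and "f (i, j) = f (i', j')"
    then show "i = i' \<and> j = j'"
      using cyclic_decomposition_pow_eq[OF dec, of "int i" "int j" "int i'" "int j'"]
      by (auto simp: f_def int_pow_int intro: eq_if_int_dvd_diff)
  qed
  moreover have "carrier G \<subseteq> f ` ({..<ord a} \<times> {..<ord u})"
  proof
    fix x assume "x \<in> carrier G"
    then obtain i j :: int where x: "x = a [^] i \<otimes> u [^] j"
      using dec'(3) by blast
    let ?i = "nat (i mod int (ord a))" and ?j = "nat (j mod int (ord u))"
    have "x = f (?i, ?j)"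
      using x dec'(1,2) \<open>ord a \<noteq> 0\<close> \<open>ord u \<noteq> 0\<close>
      by (simp add: f_def int_pow_mod_ord flip: int_pow_int)
    moreover have "(?i, ?j) \<in> {..<ord a} \<times> {..<ord u}"
      using \<open>ord a \<noteq> 0\<close> \<open>ord u \<noteq> 0\<close> by (simp add: nat_less_iff)
    ultimately show "x \<in> f ` ({..<ord a} \<times> {..<ord u})"
      by blast
  qed
  moreover have "f ` ({..<ord a} \<times> {..<ord u}) \<subseteq> carrier G"
    using dec'(1,2) by (auto simp: f_def)
  ultimately have "bij_betw f ({..<ord a} \<times> {..<ord u}) (carrier G)"
    unfolding bij_betw_def by blast
  then show ?thesis
    using bij_betw_finite bij_betw_same_card by (fastforce simp: card_cartesian_product)
qed

lemma torsion_in_cyclic_summand: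
  assumes dec: "cyclic_decomposition G b v" and "ord b = 0"
    and x: "x \<in> carrier G" and "ord x \<noteq> 0"
  shows "\<exists>j::int. x = v [^] j"
proof -
  note dec = cyclic_decompositionD[OF dec]
  obtain i j :: int where xij: "x = b [^] i \<otimes> v [^] j"
    using dec(3)[OF x] by blast
  define k where "k = int (ord x)"
  have "b [^] (i * k) \<otimes> v [^] (j * k) = x [^] k"
    using xij dec(1,2) by (simp add: int_pow_distrib int_pow_pow)
  also have "\<dots> = \<one>"
    using x by (simp add: k_def int_pow_int)
  finally have "b [^] (i * k) = \<one>"
    using dec(4) by blast
  then have "i = 0"
    using int_pow_eq_id[OF dec(1)] \<open>ord b = 0\<close> \<open>ord x \<noteq> 0\<close> by (simp add: k_def)
  then show ?thesis
    using xij dec(2) by auto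
qed

lemma ord_dvd_if_torsion:
  assumes "cyclic_decomposition G b v" and "ord b = 0" and u: "u \<in> carrier G" and "ord u \<noteq> 0"
  shows "ord u dvd ord v"
proof -
  have v: "v \<in> carrier G"
    using cyclic_decompositionD(2)[OF assms(1)] .
  obtain j :: int where "u = v [^] j"
    using torsion_in_cyclic_summand assms by blast
  then have "u [^] int (ord v) = (v [^] int (ord v)) [^] j"
    using v by (simp add: int_pow_pow mult.commute)
  then have "u [^] int (ord v) = \<one>"
    using v by (simp add: int_pow_int)
  then show ?thesis
    using int_pow_eq_id[OF u] by simp
qed

lemma torsion_trivial_if_free:
  assumes dec: "cyclic_decomposition G b v" and "ord b = 0" and "ord v = 0"
    and u: "u \<in> carrier G" and "ord u \<noteq> 0"
  shows "u = \<one>"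
proof -
  have v: "v \<in> carrier G"
    using cyclic_decompositionD(2)[OF dec] .
  obtain j :: int where uj: "u = v [^] j"
    using torsion_in_cyclic_summand[OF dec \<open>ord b = 0\<close> u \<open>ord u \<noteq> 0\<close>] by blast
  have "v [^] (j * int (ord u)) = u [^] int (ord u)"
    using uj v by (simp add: int_pow_pow)
  also have "\<dots> = \<one>"
    using u by (simp add: int_pow_int)
  finally have "j = 0"
    using int_pow_eq_id[OF v] \<open>ord v = 0\<close> \<open>ord u \<noteq> 0\<close> by simp
  then show ?thesis
    using uj by simp
qed

lemma not_cyclic_if_free:
  assumes dec: "cyclic_decomposition G b v" and "ord b = 0" and "ord v = 0"
    and a: "a \<in> carrier G" and powers: "\<And>x. x \<in> carrier G \<Longrightarrow> \<exists>k::int. x = a [^] k"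
  shows False
proof -
  note dec' = cyclic_decompositionD[OF dec]
  obtain i j :: int where aij: "a = b [^] i \<otimes> v [^] j"
    using dec'(3)[OF a] by blast
  have pow_a: "a [^] k = b [^] (i * k) \<otimes> v [^] (j * k)" for k :: int
    using aij dec'(1,2) by (simp add: int_pow_distrib int_pow_pow)
  have exponents: "i' = i'' \<and> j' = j''" if "b [^] i' \<otimes> v [^] j' = b [^] i'' \<otimes> v [^] j''" for i' j' i'' j'' :: int
    using cyclic_decomposition_pow_eq[OF dec that] \<open>ord b = 0\<close> \<open>ord v = 0\<close> by simp
  obtain k :: int where "b = a [^] k"
    using powers dec'(1) by blast
  then have "b [^] (i * k) \<otimes> v [^] (j * k) = b [^] (1::int) \<otimes> v [^] (0::int)"
    using pow_a dec'(1) by simp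
  then have "i * k = 1"
    using exponents by blast
  obtain l :: int where "v = a [^] l"
    using powers dec'(2) by blast
  then have "b [^] (i * l) \<otimes> v [^] (j * l) = b [^] (0::int) \<otimes> v [^] (1::int)"
    using pow_a dec'(2) by simp
  then have "i * l = 0" and "j * l = 1"
    using exponents by blast+
  with \<open>i * k = 1\<close> show False
    by (metis mult_eq_0_iff mult_zero_right zero_neq_one)
qed

lemma ord_ne_0_if_torsion:
  assumes decA: "cyclic_decomposition G a u" and decB: "cyclic_decomposition G b v"
    and "ord a = 0" and "ord b = 0" and "ord u \<noteq> 0"
  shows "ord v \<noteq> 0"
proof
  assume "ord v = 0"
  note A = cyclic_decompositionD[OF decA]
  have "u = \<one>"
    using torsion_trivial_if_free[OF decB \<open>ord b = 0\<close> \<open>ord v = 0\<close> A(2) \<open>ord u \<noteq> 0\<close>] .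
  then have "\<exists>k::int. x = a [^] k" if "x \<in> carrier G" for x
    using A(3)[OF that] A(1) \<open>u = \<one>\<close> by auto
  then show False
    using not_cyclic_if_free[OF decB \<open>ord b = 0\<close> \<open>ord v = 0\<close> A(1)] by blast
qed

lemma ord_ne_0_if_finite_order:
  assumes "cyclic_decomposition G b v" and "ord b \<noteq> 0" and "ord v \<noteq> 0" and "x \<in> carrier G"
  shows "ord x \<noteq> 0"
  using card_cyclic_decomposition[OF assms(1-3)] ord_ge_1 assms(4) by fastforce

lemma cyclic_decomposition_cancel:
  assumes decA: "cyclic_decomposition G a u" and decB: "cyclic_decomposition G b v"
    and "ord a = ord b"
  shows "ord u = ord v"
proof (cases "ord a = 0")
  case True
  then have "ord b = 0"
    using \<open>ord a = ord b\<close> by simp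
  show ?thesis
  proof (cases "ord u = 0")
    case True
    then have "ord v = 0"
      using ord_ne_0_if_torsion[OF decB decA \<open>ord b = 0\<close> \<open>ord a = 0\<close>] by blast
    with True show ?thesis by simp
  next
    case False
    then have "ord v \<noteq> 0"
      using ord_ne_0_if_torsion[OF decA decB \<open>ord a = 0\<close> \<open>ord b = 0\<close>] by blast
    then show ?thesis
      using ord_dvd_if_torsion[OF decA \<open>ord a = 0\<close> cyclic_decompositionD(2)[OF decB]]
        ord_dvd_if_torsion[OF decB \<open>ord b = 0\<close> cyclic_decompositionD(2)[OF decA] False]
      by (simp add: dvd_antisym)
  qed
next
  case False
  then have "ord b \<noteq> 0"
    using \<open>ord a = ord b\<close> by simp
  have "ord u \<noteq> 0 \<longleftrightarrow> ord v \<noteq> 0"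
    using ord_ne_0_if_finite_order[OF decA False _ cyclic_decompositionD(2)[OF decB]]
      ord_ne_0_if_finite_order[OF decB \<open>ord b \<noteq> 0\<close> _ cyclic_decompositionD(2)[OF decA]] by blast
  moreover have "ord a * ord u = ord b * ord v" if "ord u \<noteq> 0" "ord v \<noteq> 0"
    using card_cyclic_decomposition[OF decA False] card_cyclic_decomposition[OF decB \<open>ord b \<noteq> 0\<close>]
      that by simp
  ultimately show ?thesis
    using False \<open>ord a = ord b\<close> by fastforce
qed

end

context normal
begin

lemma rcos_eq_one_FactGroup: "x \<in> carrier G \<Longrightarrow> H #> x = \<one>\<^bsub>G Mod H\<^esub> \<longleftrightarrow> x \<in> H"
  using coset_join1[OF _ _ subgroup_axioms] rcos_const[OF is_group] by auto

lemma rcos_int_pow_FactGroup: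
  assumes "x \<in> carrier G"
  shows "(H #> x) [^]\<^bsub>G Mod H\<^esub> (k::int) = H #> (x [^] k)"
proof -
  have "group_hom G (G Mod H) (\<lambda>x. H #> x)"
    unfolding group_hom_def group_hom_axioms_def
    using is_group factorgroup_is_group r_coset_hom_Mod by blast
  then show ?thesis
    using group_hom.hom_int_pow assms by fastforce
qed

lemma rcos_int_pow_eq_one_FactGroup:
  "x \<in> carrier G \<Longrightarrow> (H #> x) [^]\<^bsub>G Mod H\<^esub> (k::int) = \<one>\<^bsub>G Mod H\<^esub> \<longleftrightarrow> x [^] k \<in> H"
  by (simp add: rcos_int_pow_FactGroup rcos_eq_one_FactGroup del: one_FactGroup)

lemma rcos_carrier_FactGroup: "x \<in> carrier G \<Longrightarrow> H #> x \<in> carrier (G Mod H)"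
  unfolding carrier_FactGroup by blast

lemma ord_FactGroup_rcos:
  assumes x: "x \<in> carrier G" and trivial: "\<And>k::int. x [^] k \<in> H \<Longrightarrow> x [^] k = \<one>"
  shows "group.ord (G Mod H) (H #> x) = ord x"
proof (rule group.ord_eq_if_int_pow_eq_one_iff[OF factorgroup_is_group is_group rcos_carrier_FactGroup[OF x] x])
  show "(H #> x) [^]\<^bsub>G Mod H\<^esub> k = \<one>\<^bsub>G Mod H\<^esub> \<longleftrightarrow> x [^] k = \<one>" for k :: int
    using rcos_int_pow_eq_one_FactGroup[OF x] trivial[of k] by auto
qed

end

lemma (in comm_group) FactGroup_cyclic_decomposition:
  assumes D: "subgroup D G" and a: "a \<in> carrier G" and u: "u \<in> carrier G"
    and span: "\<And>x. x \<in> carrier G \<Longrightarrow> \<exists>(i::int) (j::int). \<exists>d\<in>D. x = a [^] i \<otimes> u [^] j \<otimes> d"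
    and indep: "\<And>(i::int) (j::int). a [^] i \<otimes> u [^] j \<in> D \<Longrightarrow> a [^] i = \<one> \<and> u [^] j = \<one>"
  shows "cyclic_decomposition (G Mod D) (D #> a) (D #> u)"
    and "group.ord (G Mod D) (D #> a) = ord a" and "group.ord (G Mod D) (D #> u) = ord u"
proof -
  interpret N: normal D G
    using subgroup_imp_normal[OF D] .
  have pow_mult_rcos: "(D #> a) [^]\<^bsub>G Mod D\<^esub> i \<otimes>\<^bsub>G Mod D\<^esub> (D #> u) [^]\<^bsub>G Mod D\<^esub> j
      = D #> (a [^] i \<otimes> u [^] j)" for i j :: int
    using a u by (simp add: N.rcos_int_pow_FactGroup N.rcos_sum)
  have a_trivial: "a [^] k = \<one>" if "a [^] k \<in> D" for k :: int
    using indep[of k 0] that a u by simp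
  have u_trivial: "u [^] k = \<one>" if "u [^] k \<in> D" for k :: int
    using indep[of 0 k] that a u by simp
  show "group.ord (G Mod D) (D #> a) = ord a" and "group.ord (G Mod D) (D #> u) = ord u"
    using N.ord_FactGroup_rcos a u a_trivial u_trivial by blast+
  have "\<exists>(i::int) (j::int). C = (D #> a) [^]\<^bsub>G Mod D\<^esub> i \<otimes>\<^bsub>G Mod D\<^esub> (D #> u) [^]\<^bsub>G Mod D\<^esub> j"
    if "C \<in> carrier (G Mod D)" for C
  proof -
    obtain x where x: "x \<in> carrier G" and C: "C = D #> x"
      using \<open>C \<in> carrier (G Mod D)\<close> unfolding carrier_FactGroup by blast
    then obtain i j :: int and d where d: "d \<in> D" and xd: "x = a [^] i \<otimes> u [^] j \<otimes> d"
      using span by blast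
    have y: "a [^] i \<otimes> u [^] j \<in> carrier G" and dc: "d \<in> carrier G"
      using a u d N.mem_carrier by auto
    have "D #> x = (D #> d) #> (a [^] i \<otimes> u [^] j)"
      using xd y dc coset_mult_assoc[OF N.subset dc y] by (simp add: m_comm)
    also have "\<dots> = D #> (a [^] i \<otimes> u [^] j)"
      using N.rcos_const[OF is_group d] by simp
    finally have "D #> x = D #> (a [^] i \<otimes> u [^] j)" .
    then show ?thesis
      using C pow_mult_rcos by metis
  qed
  moreover have "(D #> a) [^]\<^bsub>G Mod D\<^esub> i = \<one>\<^bsub>G Mod D\<^esub> \<and> (D #> u) [^]\<^bsub>G Mod D\<^esub> j = \<one>\<^bsub>G Mod D\<^esub>"
    if "(D #> a) [^]\<^bsub>G Mod D\<^esub> i \<otimes>\<^bsub>G Mod D\<^esub> (D #> u) [^]\<^bsub>G Mod D\<^esub> j = \<one>\<^bsub>G Mod D\<^esub>"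
    for i j :: int
  proof -
    have "D #> (a [^] i \<otimes> u [^] j) = \<one>\<^bsub>G Mod D\<^esub>"
      using that by (simp only: pow_mult_rcos)
    then have "a [^] i = \<one> \<and> u [^] j = \<one>"
      using indep N.rcos_eq_one_FactGroup[of "a [^] i \<otimes> u [^] j"] a u by blast
    then show ?thesis
      using N.rcos_int_pow_eq_one_FactGroup[OF a, of i] N.rcos_int_pow_eq_one_FactGroup[OF u, of j]
        N.one_closed by metis
  qed
  ultimately show "cyclic_decomposition (G Mod D) (D #> a) (D #> u)"
    unfolding cyclic_decomposition_def
    using N.rcos_carrier_FactGroup[OF a] N.rcos_carrier_FactGroup[OF u] by blast
qed

lemma (in group) internal_direct_sumD:
  assumes "internal_direct_sum G A B"
  shows "subgroup A G" and "subgroup B G" and "A \<inter> B = {\<one>}"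
    and "x \<in> carrier G \<Longrightarrow> \<exists>a\<in>A. \<exists>b\<in>B. x = a \<otimes> b"
  using assms unfolding internal_direct_sum_def set_mult_def by blast+

lemma (in group) internal_direct_sum_singletonD:
  assumes K: "subgroup K G" and u: "u \<in> K"
    and sum: "internal_direct_sum (subgroup_generated G K) (generate G {u}) D"
  shows "x \<in> K \<Longrightarrow> \<exists>k::int. \<exists>d\<in>D. x = u [^] k \<otimes> d"
    and "u [^] (k::int) \<in> D \<Longrightarrow> u [^] k = \<one>"
    and "subgroup D G" and "D \<subseteq> K"
proof -
  have powers: "generate G {u} = range (\<lambda>k::int. u [^] k)"
    using generate_pow[OF subgroup.mem_carrier[OF K u]] by auto
  have carrier: "carrier (subgroup_generated G K) = K"
    using subgroup.carrier_subgroup_generated_subgroup[OF K] .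
  have one: "\<one>\<^bsub>subgroup_generated G K\<^esub> = \<one>"
    by (simp add: subgroup_generated_def)
  have mult: "S <#>\<^bsub>subgroup_generated G K\<^esub> T = S <#> T" for S T
    by (simp add: subgroup_generated_def set_mult_def)
  have inter: "range (\<lambda>k::int. u [^] k) \<inter> D = {\<one>}" and span: "range (\<lambda>k::int. u [^] k) <#> D = K"
    and D: "subgroup D (subgroup_generated G K)"
    using sum unfolding internal_direct_sum_def one mult carrier powers by auto
  show "\<exists>k::int. \<exists>d\<in>D. x = u [^] k \<otimes> d" if "x \<in> K"
    using that unfolding span[symmetric] set_mult_def by blast
  show "u [^] (k::int) = \<one>" if "u [^] k \<in> D"
    using that inter by blast
  show "subgroup D G" and "D \<subseteq> K"
    using D carrier subgroup_subgroup_generated_iff by auto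
qed

lemma (in group) cyclic_subgroup_generator:
  assumes A: "subgroup A G" and cyclic: "cyclic_group (subgroup_generated G A)"
  obtains a where "a \<in> A" and "A = range (\<lambda>n::int. a [^] n)" and "ord a = card A"
proof -
  interpret S: group "subgroup_generated G A"
    by simp
  have carrier: "carrier (subgroup_generated G A) = A"
    using subgroup.carrier_subgroup_generated_subgroup[OF A] .
  obtain a where a: "a \<in> A" and "A = range (\<lambda>n::int. a [^]\<^bsub>subgroup_generated G A\<^esub> n)"
    using S.cyclic_group cyclic carrier by auto
  then have range: "A = range (\<lambda>n::int. a [^] n)"
    using int_pow_subgroup_generated carrier by simp
  have "ord a = card (carrier (subgroup_generated G {a}))"
    using cyclic_order_is_ord a A subgroup.mem_carrier unfolding order_def by metis
  also have "\<dots> = card A"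
    using carrier_subgroup_generated_by_singleton a A subgroup.mem_carrier range by metis
  finally show ?thesis
    using that a range by blast
qed

lemma (in comm_group) FactGroup_cyclic_decomposition_if_direct_sums:
  assumes sum: "internal_direct_sum G A K" and a: "a \<in> A" and A: "A = range (\<lambda>n::int. a [^] n)"
    and u: "u \<in> K" and sumK: "internal_direct_sum (subgroup_generated G K) (generate G {u}) D"
  shows "cyclic_decomposition (G Mod D) (D #> a) (D #> u)"
    and "group.ord (G Mod D) (D #> a) = ord a" and "group.ord (G Mod D) (D #> u) = ord u"
proof -
  note sums = internal_direct_sumD[OF sum] and sumsK = internal_direct_sum_singletonD[OF sums(2) u sumK]
  have ac: "a \<in> carrier G" and uc: "u \<in> carrier G"
    using a u sums(1,2) subgroup.mem_carrier by metis+
  have span: "\<exists>(i::int) (j::int). \<exists>d\<in>D. x = a [^] i \<otimes> u [^] j \<otimes> d" if "x \<in> carrier G" for x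
  proof -
    obtain y z where "y \<in> A" and z: "z \<in> K" and x: "x = y \<otimes> z"
      using sums(4) \<open>x \<in> carrier G\<close> by blast
    moreover obtain i :: int where "y = a [^] i"
      using A \<open>y \<in> A\<close> by blast
    moreover obtain j :: int and d where "d \<in> D" and "z = u [^] j \<otimes> d"
      using sumsK(1)[OF z] by blast
    ultimately show ?thesis
      using ac uc sumsK(3) subgroup.mem_carrier by (metis int_pow_closed m_assoc)
  qed
  have indep: "a [^] i = \<one> \<and> u [^] j = \<one>" if "a [^] i \<otimes> u [^] j \<in> D" for i j :: int
  proof -
    have "a [^] i = (a [^] i \<otimes> u [^] j) \<otimes> inv (u [^] j)"
      using ac uc by (simp add: m_assoc)
    moreover have "(a [^] i \<otimes> u [^] j) \<otimes> inv (u [^] j) \<in> K"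
      using that sumsK(4) sums(2) u
      by (meson subgroup.m_closed subgroup.m_inv_closed subgroup_int_pow_closed subsetD)
    ultimately have "a [^] i = \<one>"
      using sums(3) A by auto
    with that show ?thesis
      using sumsK(2) uc by simp
  qed
  show "cyclic_decomposition (G Mod D) (D #> a) (D #> u)"
    and "group.ord (G Mod D) (D #> a) = ord a" and "group.ord (G Mod D) (D #> u) = ord u"
    using FactGroup_cyclic_decomposition[OF sumsK(3) ac uc span indep] by blast+
qed

lemma (in comm_group) ord_eq_if_direct_sums:
  assumes sumA: "internal_direct_sum G A K" and sumB: "internal_direct_sum G B H"
    and cyclicA: "cyclic_group (subgroup_generated G A)"
    and cyclicB: "cyclic_group (subgroup_generated G B)"
    and "card A = card B" and u: "u \<in> K" and v: "v \<in> H"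
    and sumK: "internal_direct_sum (subgroup_generated G K) (generate G {u}) D"
    and sumH: "internal_direct_sum (subgroup_generated G H) (generate G {v}) D"
  shows "ord u = ord v"
proof -
  obtain a where a: "a \<in> A" "A = range (\<lambda>n::int. a [^] n)" and "ord a = card A"
    using cyclic_subgroup_generator internal_direct_sumD(1)[OF sumA] cyclicA by metis
  obtain b where b: "b \<in> B" "B = range (\<lambda>n::int. b [^] n)" and "ord b = card B"
    using cyclic_subgroup_generator internal_direct_sumD(1)[OF sumB] cyclicB by metis
  note decA = FactGroup_cyclic_decomposition_if_direct_sums[OF sumA a u sumK]
  note decB = FactGroup_cyclic_decomposition_if_direct_sums[OF sumB b v sumH]
  interpret Q: comm_group "G Mod D"
    using abelian_FactGroup internal_direct_sum_singletonD(3)[OF internal_direct_sumD(2)[OF sumA] u sumK] .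
  have "Q.ord (D #> u) = Q.ord (D #> v)"
    using Q.cyclic_decomposition_cancel[OF decA(1) decB(1)] decA(2) decB(2)
      \<open>ord a = card A\<close> \<open>ord b = card B\<close> \<open>card A = card B\<close> by simp
  then show ?thesis
    using decA(3) decB(3) by simp
qed

section \<open>Exchanging cyclic summands\<close>

definition coset_rep :: "('a, 'b) monoid_scheme \<Rightarrow> 'a set \<Rightarrow> 'a \<Rightarrow> 'a \<Rightarrow> 'a" where
  "coset_rep G H w x = (THE y. y \<in> H \<and> (\<exists>m::int. y = x \<otimes>\<^bsub>G\<^esub> w [^]\<^bsub>G\<^esub> m))"

locale summand_exchange = comm_group G for G (structure) +
  fixes K H :: "'a set" and u v :: 'a
  assumes subgroup_K: "subgroup K G" and subgroup_H: "subgroup H G"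
    and u_mem: "u \<in> K" and v_mem: "v \<in> H"
    and K_span: "x \<in> K \<Longrightarrow> \<exists>k::int. \<exists>d\<in>K \<inter> H. x = u [^] k \<otimes> d"
    and H_span: "y \<in> H \<Longrightarrow> \<exists>k::int. \<exists>d\<in>K \<inter> H. y = v [^] k \<otimes> d"
    and u_indep: "u [^] (k::int) \<in> H \<Longrightarrow> u [^] k = \<one>"
    and v_indep: "v [^] (k::int) \<in> K \<Longrightarrow> v [^] k = \<one>"
    and ord_eq: "ord u = ord v"
begin

lemma summand_exchange_swap: "summand_exchange G H K v u"
  unfolding summand_exchange_def summand_exchange_axioms_def
  using comm_group_axioms subgroup_K subgroup_H u_mem v_mem K_span H_span u_indep v_indep ord_eq
  by (simp add: Int_commute)

lemma K_carrier: "x \<in> K \<Longrightarrow> x \<in> carrier G" and H_carrier: "y \<in> H \<Longrightarrow> y \<in> carrier G"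
  using subgroup.mem_carrier[OF subgroup_K] subgroup.mem_carrier[OF subgroup_H] by auto

lemma u_carrier: "u \<in> carrier G" and v_carrier: "v \<in> carrier G"
  using K_carrier[OF u_mem] H_carrier[OF v_mem] .

lemma pow_u_inv_v: "(u \<otimes> inv v) [^] (k::int) = u [^] k \<otimes> inv (v [^] k)"
  using u_carrier v_carrier by (simp add: int_pow_distrib int_pow_inv)

lemma pow_v_inv_u: "(v \<otimes> inv u) [^] (k::int) = (u \<otimes> inv v) [^] (- k)"
proof -
  have "v \<otimes> inv u = inv (u \<otimes> inv v)"
    using u_carrier v_carrier by (simp add: inv_mult_group)
  then show ?thesis
    using u_carrier v_carrier by (simp add: int_pow_inv int_pow_neg)
qed

lemma pow_u_inv_v_in_H:
  assumes "(u \<otimes> inv v) [^] (j::int) \<in> H"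
  shows "(u \<otimes> inv v) [^] j = \<one>"
proof -
  have "u [^] j = (u \<otimes> inv v) [^] j \<otimes> v [^] j"
    using u_carrier v_carrier by (simp add: pow_u_inv_v m_assoc)
  then have "u [^] j \<in> H"
    using assms v_mem subgroup_H by (simp add: subgroup.m_closed subgroup_int_pow_closed)
  then have "u [^] j = \<one>"
    by (rule u_indep)
  moreover have "v [^] j = \<one>"
    using calculation ord_eq int_pow_eq_id u_carrier v_carrier by metis
  ultimately show ?thesis
    by (simp add: pow_u_inv_v)
qed

lemma coset_meets_H:
  assumes x: "x \<in> K"
  shows "\<exists>m::int. x \<otimes> (u \<otimes> inv v) [^] m \<in> H"
proof -
  obtain k :: int and d where d: "d \<in> K \<inter> H" and xk: "x = u [^] k \<otimes> d"
    using K_span[OF x] by blast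
  have dc: "d \<in> carrier G"
    using H_carrier d by blast
  have "(u \<otimes> inv v) [^] (- k) = v [^] k \<otimes> inv (u [^] k)"
    using u_carrier v_carrier by (simp add: int_pow_neg pow_u_inv_v inv_mult_group m_comm)
  then have "x \<otimes> (u \<otimes> inv v) [^] (- k) = (u [^] k \<otimes> inv (u [^] k)) \<otimes> (v [^] k \<otimes> d)"
    using xk dc u_carrier v_carrier by (simp add: m_ac)
  also have "\<dots> = v [^] k \<otimes> d"
    using dc v_carrier u_carrier by simp
  finally have "x \<otimes> (u \<otimes> inv v) [^] (- k) \<in> H"
    using d v_mem subgroup_H by (simp add: subgroup.m_closed subgroup_int_pow_closed)
  then show ?thesis ..
qed

lemma coset_meets_H_once:
  assumes x: "x \<in> K"
  shows "\<exists>!y. y \<in> H \<and> (\<exists>m::int. y = x \<otimes> (u \<otimes> inv v) [^] m)"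
proof -
  let ?w = "u \<otimes> inv v"
  have w: "?w \<in> carrier G" and xc: "x \<in> carrier G"
    using u_carrier v_carrier K_carrier[OF x] by simp_all
  obtain k :: int where y0: "x \<otimes> ?w [^] k \<in> H"
    using coset_meets_H[OF x] by blast
  have unique: "y = x \<otimes> ?w [^] k" if "y \<in> H" and y: "y = x \<otimes> ?w [^] m" for y and m :: int
  proof -
    have y_shift: "y = (x \<otimes> ?w [^] k) \<otimes> ?w [^] (m - k)"
      using y xc w by (simp add: m_assoc flip: int_pow_mult)
    then have "?w [^] (m - k) = inv (x \<otimes> ?w [^] k) \<otimes> y"
      using xc w by (simp add: inv_solve_left)
    then have "?w [^] (m - k) \<in> H"
      using y0 \<open>y \<in> H\<close> subgroup_H by (simp add: subgroup.m_closed subgroup.m_inv_closed)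
    then have "?w [^] (m - k) = \<one>"
      by (rule pow_u_inv_v_in_H)
    with y_shift show ?thesis
      using xc w by simp
  qed
  show ?thesis
  proof (rule ex1I[of _ "x \<otimes> ?w [^] k"])
    show "x \<otimes> ?w [^] k \<in> H \<and> (\<exists>m::int. x \<otimes> ?w [^] k = x \<otimes> ?w [^] m)"
      using y0 by blast
    show "y = x \<otimes> ?w [^] k" if "y \<in> H \<and> (\<exists>m::int. y = x \<otimes> ?w [^] m)" for y
      using that unique by blast
  qed
qed

lemma coset_rep_eqI:
  assumes "x \<in> K" and "y \<in> H" and "y = x \<otimes> (u \<otimes> inv v) [^] (m::int)"
  shows "coset_rep G H (u \<otimes> inv v) x = y"
  unfolding coset_rep_def using coset_meets_H_once assms by (intro the1_equality) blast+

lemma coset_rep_in_coset: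
  assumes "x \<in> K"
  shows "coset_rep G H (u \<otimes> inv v) x \<in> H"
    and "\<exists>m::int. coset_rep G H (u \<otimes> inv v) x = x \<otimes> (u \<otimes> inv v) [^] m"
  using theI'[OF coset_meets_H_once[OF assms]] unfolding coset_rep_def by blast+

lemma coset_rep_inverse:
  assumes x: "x \<in> K"
  shows "coset_rep G K (v \<otimes> inv u) (coset_rep G H (u \<otimes> inv v) x) = x"
proof -
  interpret swap: summand_exchange G H K v u
    by (rule summand_exchange_swap)
  let ?w = "u \<otimes> inv v"
  obtain m :: int where m: "coset_rep G H ?w x = x \<otimes> ?w [^] m"
    using coset_rep_in_coset(2)[OF x] by blast
  have "x = coset_rep G H ?w x \<otimes> (v \<otimes> inv u) [^] m"
    unfolding m pow_v_inv_u using K_carrier[OF x] u_carrier v_carrier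
    by (simp add: m_assoc flip: int_pow_mult)
  then show ?thesis
    using swap.coset_rep_eqI coset_rep_in_coset(1)[OF x] x by blast
qed

lemma coset_rep_iso:
  "coset_rep G H (u \<otimes> inv v) \<in> iso (subgroup_generated G K) (subgroup_generated G H)"
proof -
  interpret swap: summand_exchange G H K v u
    by (rule summand_exchange_swap)
  let ?w = "u \<otimes> inv v" and ?f = "coset_rep G H (u \<otimes> inv v)"
  have w: "?w \<in> carrier G"
    using u_carrier v_carrier by simp
  have carrier_K: "carrier (subgroup_generated G K) = K" and carrier_H: "carrier (subgroup_generated G H) = H"
    using subgroup.carrier_subgroup_generated_subgroup subgroup_K subgroup_H by blast+
  have mult: "?f (x \<otimes> y) = ?f x \<otimes> ?f y" if x: "x \<in> K" and y: "y \<in> K" for x y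
  proof -
    obtain m1 m2 :: int where m1: "?f x = x \<otimes> ?w [^] m1" and m2: "?f y = y \<otimes> ?w [^] m2"
      using coset_rep_in_coset(2) x y by metis
    have "?f x \<otimes> ?f y = (x \<otimes> y) \<otimes> ?w [^] (m1 + m2)"
      unfolding m1 m2 using K_carrier[OF x] K_carrier[OF y] w
      by (simp add: int_pow_mult m_ac)
    moreover have "x \<otimes> y \<in> K" and "?f x \<otimes> ?f y \<in> H"
      using x y coset_rep_in_coset(1) subgroup_K subgroup_H subgroup.m_closed by metis+
    ultimately show ?thesis
      using coset_rep_eqI by simp
  qed
  have "?f \<in> hom (subgroup_generated G K) (subgroup_generated G H)"
  proof (rule homI)
    show "?f x \<in> carrier (subgroup_generated G H)" if "x \<in> carrier (subgroup_generated G K)" for x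
      using that coset_rep_in_coset(1) unfolding carrier_K carrier_H by blast
    show "?f (x \<otimes>\<^bsub>subgroup_generated G K\<^esub> y) = ?f x \<otimes>\<^bsub>subgroup_generated G H\<^esub> ?f y"
      if "x \<in> carrier (subgroup_generated G K)" "y \<in> carrier (subgroup_generated G K)" for x y
      using that mult unfolding carrier_K by (simp add: subgroup_generated_def)
  qed
  moreover have "bij_betw ?f K H"
  proof (rule bij_betw_byWitness[of _ "coset_rep G K (v \<otimes> inv u)"])
    show "\<forall>x\<in>K. coset_rep G K (v \<otimes> inv u) (?f x) = x"
      using coset_rep_inverse by blast
    show "\<forall>y\<in>H. ?f (coset_rep G K (v \<otimes> inv u) y) = y"
      using swap.coset_rep_inverse by blast
    show "?f ` K \<subseteq> H" and "coset_rep G K (v \<otimes> inv u) ` H \<subseteq> K"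
      using coset_rep_in_coset(1) swap.coset_rep_in_coset(1) by blast+
  qed
  ultimately show ?thesis
    unfolding iso_def carrier_K carrier_H by blast
qed

end

section \<open>Computing the isomorphism\<close>

lemma (in comm_group) summand_exchange_if_direct_sums:
  assumes sumA: "internal_direct_sum G A K" and sumB: "internal_direct_sum G B H"
    and cyclicA: "cyclic_group (subgroup_generated G A)"
    and cyclicB: "cyclic_group (subgroup_generated G B)"
    and card: "card A = card B" and u: "u \<in> K" and v: "v \<in> H"
    and sumK: "internal_direct_sum (subgroup_generated G K) (generate G {u}) (K \<inter> H)"
    and sumH: "internal_direct_sum (subgroup_generated G H) (generate G {v}) (K \<inter> H)"
  shows "summand_exchange G K H u v"
proof -
  have K: "subgroup K G" and H: "subgroup H G"
    using internal_direct_sumD(2) sumA sumB by blast+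
  note spanK = internal_direct_sum_singletonD[OF K u sumK]
  note spanH = internal_direct_sum_singletonD[OF H v sumH]
  have "u [^] k = \<one>" if "u [^] k \<in> H" for k :: int
    using spanK(2) that subgroup_int_pow_closed[OF K u] by blast
  moreover have "v [^] k = \<one>" if "v [^] k \<in> K" for k :: int
    using spanH(2) that subgroup_int_pow_closed[OF H v] by blast
  moreover have "ord u = ord v"
    using ord_eq_if_direct_sums[OF sumA sumB cyclicA cyclicB card u v sumK sumH] .
  ultimately show ?thesis
    unfolding summand_exchange_def summand_exchange_axioms_def
    using comm_group_axioms K H u v spanK(1) spanH(1) by blast
qed

lemma eval_iso_template_coset_rep:
  fixes E :: "nat monoid"
  assumes "summand_exchange E K H u v" and "decided_group E H s"
    and "s 2 = r_const u" and "s 3 = r_const v" and x: "x \<in> K"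
  shows "eval (fill s iso_template) [x] (coset_rep E H (u \<otimes>\<^bsub>E\<^esub> inv\<^bsub>E\<^esub> v) x)"
proof -
  interpret summand_exchange E K H u v
    by fact
  interpret decided_group E H s
    by fact
  have "\<exists>m::int. x \<otimes>\<^bsub>E\<^esub> (u \<otimes>\<^bsub>E\<^esub> inv\<^bsub>E\<^esub> v) [^]\<^bsub>E\<^esub> m \<in> H"
    using coset_rep_in_coset[OF x] by metis
  then obtain y m where "eval (fill s iso_template) [x] y" and "y \<in> H"
    and "y = x \<otimes>\<^bsub>E\<^esub> (u \<otimes>\<^bsub>E\<^esub> inv\<^bsub>E\<^esub> v) [^]\<^bsub>E\<^esub> (m::int)"
    using eval_iso_template[OF assms(3,4) u_carrier v_carrier K_carrier[OF x]] by blast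
  then show ?thesis
    using coset_rep_eqI[OF x] by simp
qed

lemma group_index_program:
  assumes "group_index e E"
  obtains p where "code p = snd (prod_decode e)"
    and "\<And>a b c. eval p [a, b, c]
      (if a \<in> carrier E \<and> b \<in> carrier E \<and> c \<in> carrier E \<and> a \<otimes>\<^bsub>E\<^esub> b = c then 1 else 0)"
proof -
  have "phi (snd (prod_decode e)) (case t of (a, b, c) \<Rightarrow> [a, b, c])
      (case t of (a, b, c) \<Rightarrow> if a \<in> carrier E \<and> b \<in> carrier E \<and> c \<in> carrier E \<and> a \<otimes>\<^bsub>E\<^esub> b = c
       then 1 else 0)" for t
    using assms unfolding group_index_def by (simp split: prod.split)
  then show ?thesis
    using that phi_program by (metis (no_types, lifting) case_prod_conv)
qed

lemma char_index_program:
  assumes "char_index e S"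
  obtains p where "code p = e" and "\<And>y. eval p [y] (if y \<in> S then 1 else 0)"
  using phi_program[of e "\<lambda>y. [y]" "\<lambda>y. if y \<in> S then 1 else 0"] assms that
  unfolding char_index_def by blast

text \<open>Only the indices of E and H are read.\<close>
definition r_iso_index :: recf where
  "r_iso_index = Comp (r_fill_code iso_template)
     [Comp r_snd_decode [Proj 0], Proj 4, Comp r_code_const [Proj 5], Comp r_code_const [Proj 6]]"

lemma eval_r_iso_index:
  assumes "code pm = snd (prod_decode eE)" and "code ph = eH"
  shows "eval r_iso_index [eE, eA, eB, eG, eH, u, v]
    (code (fill ((!) [pm, ph, r_const u, r_const v]) iso_template))"
proof -
  have fill_code: "eval (r_fill_code iso_template) [snd (prod_decode eE), eH, code (r_const u), code (r_const v)]
      (code (fill ((!) [pm, ph, r_const u, r_const v]) iso_template))"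
    using eval_r_fill_code[of iso_template "[pm, ph, r_const u, r_const v]"] holes_iso_template assms
    by (simp add: numeral_eq_Suc)
  show ?thesis
    unfolding r_iso_index_def
    by (rule eval_Comp4[OF eval_Comp1[OF eval_Proj_nth eval_r_snd_decode] eval_Proj_nth
          eval_Comp1[OF eval_Proj_nth eval_r_code_const] eval_Comp1[OF eval_Proj_nth eval_r_code_const]
          fill_code]) simp_all
qed

lemma r_iso_index_correct:
  fixes E :: "nat monoid" (structure)
  assumes "group_index eE E" and "comm_group E" and "char_index eH H"
    and sumA: "internal_direct_sum E A G" and sumB: "internal_direct_sum E B H"
    and iso: "subgroup_generated E A \<cong> subgroup_generated E B"
    and cyclicA: "cyclic_group (subgroup_generated E A)"
    and cyclicB: "cyclic_group (subgroup_generated E B)"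
    and u: "u \<in> G" and v: "v \<in> H"
    and sumG: "internal_direct_sum (subgroup_generated E G) (generate E {u}) (G \<inter> H)"
    and sumH: "internal_direct_sum (subgroup_generated E H) (generate E {v}) (G \<inter> H)"
  shows "\<exists>n. phi (code r_iso_index) [eE, eA, eB, eG, eH, u, v] n \<and>
    (\<exists>f. f \<in> iso (subgroup_generated E G) (subgroup_generated E H) \<and> (\<forall>x \<in> G. phi n [x] (f x)))"
proof -
  interpret comm_group E
    by fact
  obtain pm where pm: "code pm = snd (prod_decode eE)" and mult: "\<And>a b c. eval pm [a, b, c]
      (if a \<in> carrier E \<and> b \<in> carrier E \<and> c \<in> carrier E \<and> a \<otimes> b = c then 1 else 0)"
    using group_index_program[OF assms(1)] by blast
  obtain ph where ph: "code ph = eH" and member: "\<And>y. eval ph [y] (if y \<in> H then 1 else 0)"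
    using char_index_program[OF assms(3)] by blast
  define s where "s = (!) [pm, ph, r_const u, r_const v]"
  have "card A = card B"
    using iso_same_card[OF iso] internal_direct_sumD(1) sumA sumB
    by (metis subgroup.carrier_subgroup_generated_subgroup)
  then have exchange: "summand_exchange E G H u v"
    using summand_exchange_if_direct_sums[OF sumA sumB cyclicA cyclicB _ u v sumG sumH] by blast
  have "decided_group E H s"
    using is_group mult member by unfold_locales (simp_all add: s_def)
  then have "\<forall>x\<in>G. phi (code (fill s iso_template)) [x] (coset_rep E H (u \<otimes> inv v) x)"
    using eval_iso_template_coset_rep[OF exchange] unfolding phi_def s_def by auto
  moreover have "phi (code r_iso_index) [eE, eA, eB, eG, eH, u, v] (code (fill s iso_template))"
    using eval_r_iso_index[OF pm ph] unfolding phi_def s_def by blast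
  ultimately show ?thesis
    using summand_exchange.coset_rep_iso[OF exchange] by blast
qed

theorem lemma2p4:
  "\<exists>c. \<forall>(E :: nat monoid) eE eA eB eG eH A B G H u v.
     group_index eE E \<and> comm_group E \<and>
     char_index eA A \<and> char_index eB B \<and> char_index eG G \<and> char_index eH H \<and>
     internal_direct_sum E A G \<and> internal_direct_sum E B H \<and>
     subgroup_generated E A \<cong> subgroup_generated E B \<and>
     cyclic_group (subgroup_generated E A) \<and> cyclic_group (subgroup_generated E B) \<and>
     u \<in> G \<and> v \<in> H \<and>
     internal_direct_sum (subgroup_generated E G) (generate E {u}) (G \<inter> H) \<and>
     internal_direct_sum (subgroup_generated E H) (generate E {v}) (G \<inter> H)
     \<longrightarrow> (\<exists>n. phi c [eE, eA, eB, eG, eH, u, v] n \<and>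
            (\<exists>f. f \<in> iso (subgroup_generated E G) (subgroup_generated E H) \<and>
                 (\<forall>x \<in> G. phi n [x] (f x))))"
  by (rule exI[of _ "code r_iso_index"], intro allI impI) (blast intro: r_iso_index_correct)

end
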